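(* Let $a=\tfrac12$ (equivalently $\sigma=2$), $\tfrac12<b<\tfrac34$, $\tfrac14<d<\tfrac12$, and $\kappa,s\in\mathbb{R}$ with $|\kappa|\le s$. Then there exists $C>0$ such that for all $u\in X^{\kappa,b}$ and $v\in X^{s,b}_a$, $$\|\bar u\, v\|_{X^{\kappa,-d}}\le C\,\|u\|_{X^{\kappa,b}}\,\|v\|_{X^{s,b}_a}.$$
   Context: Notation: $\langle x\rangle=1+|x|$; $\hat f(\xi,\tau)$ is the space-time Fourier transform. For $s,b\in\mathbb{R}$ and $a>0$, $X^{s,b}$ is the completion of $\mathcal{S}(\mathbb{R}^2)$ under $\|f\|_{X^{s,b}}=\|\langle\xi\rangle^s\langle\tau+\xi^2\rangle^b\hat f(\xi,\tau)\|_{L^2_{\xi,\tau}}$, and $X^{s,b}_a$ is the completion under $\|f\|_{X^{s,b}_a}=\|\langle\xi\rangle^s\langle\tau+a\xi^2\rangle^b\hat f(\xi,\tau)\|_{L^2_{\xi,\tau}}$. *)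

theory Defs
  imports "HOL-Analysis.Analysis"
begin

definition jb :: "real \<Rightarrow> real" where
  "jb x = 1 + \<bar>x\<bar>"

(* F is the space-time Fourier
   transform \<hat>f(\<xi>,\<tau>) of f (first component \<xi>, second \<tau>):
   Xsq s b a F = \<parallel><\<xi>>^s <\<tau> + a \<xi>^2>^b F(\<xi>,\<tau>)\<parallel>_{L^2}^2.
   X^{s,b} corresponds to a = 1, X^{s,b}_a to general a. *)
definition Xsq :: "real \<Rightarrow> real \<Rightarrow> real \<Rightarrow> (real \<times> real \<Rightarrow> complex) \<Rightarrow> ennreal" where
  "Xsq s b a F = (\<integral>\<^sup>+ z. ennreal ((jb (fst z) powr s * jb (snd z + a * (fst z)^2) powr b
                                   * cmod (F z))^2) \<partial>lborel)"

(* Fourier transform of  conj(u) * v  in terms of F = \<hat>u, G = \<hat>v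
   (up to the harmless constant (2\<pi>)^(-2)):
   \<hat>(conj u * v)(z) = \<integral> conj(\<hat>u(w - z)) \<hat>v(w) dw. *)
definition conj_prod_hat :: "(real \<times> real \<Rightarrow> complex) \<Rightarrow> (real \<times> real \<Rightarrow> complex) \<Rightarrow> real \<times> real \<Rightarrow> complex" where
  "conj_prod_hat F G = (\<lambda>z. \<integral> w. cnj (F (w - z)) * G w \<partial>lborel)"

end

theory Submission
  imports Defs
begin

(* With z = (xi, tau), w = (eta, tau') and sigma_a(xi, tau) = tau + a xi^2, the output weight
   <xi>^kappa <sigma_1(z)>^(-d) is at most <xi>^kappa <= <eta - xi>^kappa <eta>^s, so the weighted
   product is dominated pointwise by the X^{kappa,b} and X^{s,b}_{1/2} densities of the two factors
   integrated against the kernel <sigma_1(w - z)>^(-b) <sigma_{1/2}(w)>^(-b).  Cauchy-Schwarz in w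
   and Fubini in z reduce the estimate to a bound, uniform in z, on the L^2_w norm of this kernel.
   Integrating in tau' first leaves <q(eta)>^(-2b) for a quadratic q with leading coefficient
   1 - 1/2 <> 0, whose eta-integral is bounded independently of the lower coefficients as 2b > 1. *)

lemma jb_ge_1: "1 \<le> jb x"
  by (simp add: jb_def)

lemma jb_pos: "0 < jb x"
  by (simp add: jb_def)

lemma jb_minus: "jb (- x) = jb x"
  by (simp add: jb_def)

lemma borel_measurable_jb [measurable]: "jb \<in> borel_measurable borel"
  unfolding jb_def by measurable

lemma jb_add_le: "jb (x + y) \<le> jb x * jb y"
  by (simp add: jb_def algebra_simps abs_triangle_ineq[THEN order_trans])

lemma jb_powr_neg_le_1: "0 \<le> p \<Longrightarrow> jb x powr (-p) \<le> 1"
  using powr_mono2'[of "-p" 1 "jb x"] jb_ge_1[of x] by simp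

lemma jb_powr_neg_antimono: "\<bar>y\<bar> \<le> \<bar>x\<bar> \<Longrightarrow> 0 \<le> p \<Longrightarrow> jb x powr (-p) \<le> jb y powr (-p)"
  by (intro powr_mono2') (auto simp: jb_def)

lemma jb_powr_le_mult:
  assumes "\<bar>k\<bar> \<le> s"
  shows "jb x powr k \<le> jb (y - x) powr k * jb y powr s"
proof (cases "0 \<le> k")
  case True
  have "jb x \<le> jb (y - x) * jb y"
    using jb_add_le[of "x - y" y] jb_minus[of "y - x"] by simp
  then have "jb x powr k \<le> (jb (y - x) * jb y) powr k"
    using True by (intro powr_mono2) (auto simp: jb_pos less_imp_le)
  also have "\<dots> = jb (y - x) powr k * jb y powr k"
    by (simp add: powr_mult jb_pos less_imp_le)
  also have "\<dots> \<le> jb (y - x) powr k * jb y powr s"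
    using assms jb_ge_1 by (intro mult_left_mono powr_mono) auto
  finally show ?thesis .
next
  case False
  have "jb (y - x) \<le> jb y * jb x"
    using jb_add_le[of y "- x"] jb_minus[of x] by simp
  then have "jb (y - x) powr (-k) \<le> (jb y * jb x) powr (-k)"
    using False by (intro powr_mono2) (auto simp: jb_pos less_imp_le)
  also have "\<dots> = jb y powr (-k) * jb x powr (-k)"
    by (simp add: powr_mult jb_pos less_imp_le)
  also have "\<dots> \<le> jb y powr s * jb x powr (-k)"
    using False assms jb_ge_1 by (intro mult_right_mono powr_mono) auto
  finally show ?thesis
    using jb_pos[of x] jb_pos[of "y - x"] by (simp add: powr_minus field_simps)
qed

lemma nn_integral_lborel_translate:
  fixes f :: "'a::euclidean_space \<Rightarrow> ennreal"
  assumes [measurable]: "f \<in> borel_measurable borel"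
  shows "(\<integral>\<^sup>+x. f (c + x) \<partial>lborel) = (\<integral>\<^sup>+x. f x \<partial>lborel)"
proof -
  have "(\<integral>\<^sup>+x. f x \<partial>lborel) = (\<integral>\<^sup>+x. f x \<partial>distr lborel borel ((+) c))"
    by (simp add: lborel_distr_plus)
  also have "\<dots> = (\<integral>\<^sup>+x. f (c + x) \<partial>lborel)"
    by (rule nn_integral_distr) auto
  finally show ?thesis ..
qed

definition jb_powr_integral :: "real \<Rightarrow> ennreal" where
  "jb_powr_integral p = (\<integral>\<^sup>+t. ennreal (jb t powr (-p)) \<partial>lborel)"

lemma jb_powr_integral_shift:
  "(\<integral>\<^sup>+t. ennreal (jb (t + c) powr (-p)) \<partial>lborel) = jb_powr_integral p"
  using nn_integral_lborel_translate[of "\<lambda>t. ennreal (jb t powr (-p))" c]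
  by (simp add: jb_powr_integral_def add.commute)

lemma jb_powr_integral_finite:
  assumes "1 < p"
  shows "jb_powr_integral p < \<infinity>"
proof -
  define h where "h x = ennreal (x powr (-p)) * indicator {1..} x" for x :: real
  have [measurable]: "h \<in> borel_measurable borel"
    unfolding h_def by measurable
  have "((\<lambda>x. x powr (-p)) has_integral 1 / (p - 1)) {1..}"
    using has_integral_powr_to_inf[of "-p" 1] assms by (simp add: minus_divide_right)
  then have h_integral: "(\<integral>\<^sup>+x. h x \<partial>lborel) = ennreal (1 / (p - 1))"
    unfolding h_def by (intro nn_integral_has_integral_lebesgue') auto
  have h_reflect: "(\<integral>\<^sup>+t. h (1 - t) \<partial>lborel) = (\<integral>\<^sup>+x. h x \<partial>lborel)"
    using nn_integral_real_affine[of h "-1" 1] by simp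
  have "ennreal (jb t powr (-p)) \<le> h (1 + t) + h (1 - t)" for t
    by (cases "0 \<le> t") (simp_all add: h_def jb_def)
  then have "jb_powr_integral p \<le> (\<integral>\<^sup>+t. h (1 + t) + h (1 - t) \<partial>lborel)"
    unfolding jb_powr_integral_def by (intro nn_integral_mono)
  also have "\<dots> = 2 * ennreal (1 / (p - 1))"
    by (simp add: nn_integral_add nn_integral_lborel_translate h_reflect h_integral mult_2)
  also have "\<dots> < \<infinity>"
    by (simp add: ennreal_mult_less_top)
  finally show ?thesis .
qed

lemma nn_integral_jb_powr_product_le:
  assumes "0 \<le> p"
  shows "(\<integral>\<^sup>+t. ennreal (jb (t + \<alpha>) powr (-p) * jb (t + \<beta>) powr (-p)) \<partial>lborel)
           \<le> ennreal (jb ((\<alpha> - \<beta>) / 2) powr (-p)) * (2 * jb_powr_integral p)"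
proof -
  define c where "c = jb ((\<alpha> - \<beta>) / 2) powr (-p)"
  have pointwise: "jb (t + \<alpha>) powr (-p) * jb (t + \<beta>) powr (-p)
                     \<le> c * (jb (t + \<alpha>) powr (-p) + jb (t + \<beta>) powr (-p))" for t
  proof -
    have "\<bar>(\<alpha> - \<beta>) / 2\<bar> \<le> \<bar>t + \<alpha>\<bar> \<or> \<bar>(\<alpha> - \<beta>) / 2\<bar> \<le> \<bar>t + \<beta>\<bar>"
      using abs_triangle_ineq4[of "t + \<alpha>" "t + \<beta>"] by (simp add: abs_divide) (smt (verit))
    then have "jb (t + \<alpha>) powr (-p) \<le> c \<or> jb (t + \<beta>) powr (-p) \<le> c"
      unfolding c_def using assms jb_powr_neg_antimono by blast
    then show ?thesis
    proof
      assume "jb (t + \<alpha>) powr (-p) \<le> c"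
      then have "jb (t + \<alpha>) powr (-p) * jb (t + \<beta>) powr (-p) \<le> c * jb (t + \<beta>) powr (-p)"
        by (rule mult_right_mono) simp
      moreover have "0 \<le> c * jb (t + \<alpha>) powr (-p)"
        by (simp add: c_def)
      ultimately show ?thesis
        by (simp add: distrib_left)
    next
      assume "jb (t + \<beta>) powr (-p) \<le> c"
      then have "jb (t + \<alpha>) powr (-p) * jb (t + \<beta>) powr (-p) \<le> c * jb (t + \<alpha>) powr (-p)"
        by (subst mult.commute, rule mult_right_mono) simp
      moreover have "0 \<le> c * jb (t + \<beta>) powr (-p)"
        by (simp add: c_def)
      ultimately show ?thesis
        by (simp add: distrib_left)
    qed
  qed
  have "(\<integral>\<^sup>+t. ennreal (jb (t + \<alpha>) powr (-p) * jb (t + \<beta>) powr (-p)) \<partial>lborel)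
          \<le> (\<integral>\<^sup>+t. ennreal c * (ennreal (jb (t + \<alpha>) powr (-p)) + ennreal (jb (t + \<beta>) powr (-p))) \<partial>lborel)"
    using pointwise by (intro nn_integral_mono)
      (simp add: c_def ennreal_mult'[symmetric] ennreal_plus[symmetric] del: ennreal_plus)
  also have "\<dots> = ennreal c * (2 * jb_powr_integral p)"
    by (simp add: nn_integral_cmult nn_integral_add jb_powr_integral_shift mult_2)
  finally show ?thesis
    unfolding c_def .
qed

lemma jb_powr_quadratic_le:
  fixes x \<mu> :: real
  assumes "0 \<le> p"
  defines "r \<equiv> sqrt (max \<mu> 0)"
  shows "jb (x\<^sup>2 - \<mu>) powr (-p) \<le> 2 powr p * (jb (x - r) powr (-p) + jb (x + r) powr (-p))"
proof -
  define y where "y = \<bar>x\<bar> - r"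
  have r_nonneg: "0 \<le> r"
    by (simp add: r_def)
  have "y\<^sup>2 \<le> \<bar>x\<^sup>2 - \<mu>\<bar>"
  proof (cases "0 \<le> \<mu>")
    case True
    then have "x\<^sup>2 - \<mu> = (\<bar>x\<bar> - r) * (\<bar>x\<bar> + r)"
      by (simp add: r_def power2_eq_square algebra_simps flip: power2_abs)
    then have "\<bar>x\<^sup>2 - \<mu>\<bar> = \<bar>y\<bar> * (\<bar>x\<bar> + r)"
      by (simp add: y_def abs_mult r_def)
    moreover have "\<bar>y\<bar> \<le> \<bar>x\<bar> + r"
      using r_nonneg unfolding y_def by arith
    ultimately show ?thesis
      by (metis power2_abs power2_eq_square abs_ge_zero mult_left_mono)
  next
    case False
    then show ?thesis
      by (simp add: y_def r_def)
  qed
  moreover have "\<bar>y\<bar> \<le> 1 + y\<^sup>2"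
  proof (cases "\<bar>y\<bar> \<le> 1")
    case True
    then show ?thesis
      using zero_le_power2[of y] by linarith
  next
    case False
    then have "\<bar>y\<bar> * 1 \<le> \<bar>y\<bar> * \<bar>y\<bar>"
      by (intro mult_left_mono) auto
    then show ?thesis
      by (simp add: power2_eq_square)
  qed
  ultimately have "jb y / 2 \<le> jb (x\<^sup>2 - \<mu>)"
    by (simp add: jb_def) (smt (verit))
  then have "jb (x\<^sup>2 - \<mu>) powr (-p) \<le> (jb y / 2) powr (-p)"
    using assms jb_pos[of y] by (intro powr_mono2') auto
  also have "\<dots> = 2 powr p * jb y powr (-p)"
    using jb_pos[of y] by (simp add: powr_divide powr_minus divide_simps)
  also have "jb y = jb (x - r) \<or> jb y = jb (x + r)"
    by (cases "0 \<le> x") (auto simp: y_def jb_def abs_minus_commute)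
  then have "2 powr p * jb y powr (-p) \<le> 2 powr p * (jb (x - r) powr (-p) + jb (x + r) powr (-p))"
    by (intro mult_left_mono) auto
  finally show ?thesis .
qed

lemma nn_integral_jb_powr_quadratic_le:
  assumes "0 \<le> p"
  shows "(\<integral>\<^sup>+x. ennreal (jb (x\<^sup>2 - \<mu>) powr (-p)) \<partial>lborel) \<le> ennreal (2 powr p) * (2 * jb_powr_integral p)"
proof -
  define r where "r = sqrt (max \<mu> 0)"
  have "(\<integral>\<^sup>+x. ennreal (jb (x\<^sup>2 - \<mu>) powr (-p)) \<partial>lborel)
          \<le> (\<integral>\<^sup>+x. ennreal (2 powr p) * (ennreal (jb (x + - r) powr (-p)) + ennreal (jb (x + r) powr (-p))) \<partial>lborel)"
    using jb_powr_quadratic_le[OF assms, of _ \<mu>] by (intro nn_integral_mono)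
      (simp add: r_def ennreal_mult'[symmetric] ennreal_plus[symmetric] del: ennreal_plus)
  also have "\<dots> = ennreal (2 powr p) * (2 * jb_powr_integral p)"
    by (simp add: nn_integral_cmult nn_integral_add jb_powr_integral_shift mult_2 del: add_uminus_conv_diff)
  finally show ?thesis .
qed

definition modulation :: "real \<Rightarrow> real \<times> real \<Rightarrow> real" where
  "modulation a z = snd z + a * (fst z)\<^sup>2"

lemma borel_measurable_modulation [measurable]: "modulation a \<in> borel_measurable borel"
proof -
  have "modulation a \<in> borel_measurable (borel \<Otimes>\<^sub>M borel)"
    unfolding modulation_def by measurable
  then show ?thesis
    by (simp add: borel_prod)
qed

lemma nn_integral_modulation_kernel_le:
  assumes "0 \<le> p"
  shows "(\<integral>\<^sup>+w. ennreal (jb (modulation 1 (w - z)) powr (-p) * jb (modulation (1/2) w) powr (-p)) \<partial>lborel)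
           \<le> 8 * ennreal (2 powr p) * jb_powr_integral p ^ 2"
proof -
  obtain \<xi> \<tau> where z: "z = (\<xi>, \<tau>)"
    by fastforce
  define \<mu> where "\<mu> = (\<xi>\<^sup>2 + \<tau>) / 2"
  define f where "f w = ennreal (jb (modulation 1 (w - z)) powr (-p) * jb (modulation (1/2) w) powr (-p))" for w
  have [measurable]: "f \<in> borel_measurable (lborel \<Otimes>\<^sub>M lborel)"
    unfolding f_def lborel_prod by measurable
  have tau_integral: "(\<integral>\<^sup>+t. f (x, t) \<partial>lborel)
      \<le> ennreal (jb (((x - 2 * \<xi>) / 2)\<^sup>2 - \<mu>) powr (-p)) * (2 * jb_powr_integral p)" for x
  proof -
    have "(\<integral>\<^sup>+t. f (x, t) \<partial>lborel)
        = (\<integral>\<^sup>+t. ennreal (jb (t + ((x - \<xi>)\<^sup>2 - \<tau>)) powr (-p) * jb (t + x\<^sup>2 / 2) powr (-p)) \<partial>lborel)"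
      by (simp add: f_def z modulation_def algebra_simps)
    also have "\<dots> \<le> ennreal (jb ((((x - \<xi>)\<^sup>2 - \<tau>) - x\<^sup>2 / 2) / 2) powr (-p)) * (2 * jb_powr_integral p)"
      by (rule nn_integral_jb_powr_product_le[OF assms])
    also have "(((x - \<xi>)\<^sup>2 - \<tau>) - x\<^sup>2 / 2) / 2 = ((x - 2 * \<xi>) / 2)\<^sup>2 - \<mu>"
      by (simp add: \<mu>_def power2_eq_square field_simps)
    finally show ?thesis .
  qed
  have xi_integral: "(\<integral>\<^sup>+x. ennreal (jb (((x - 2 * \<xi>) / 2)\<^sup>2 - \<mu>) powr (-p)) \<partial>lborel)
      = 2 * (\<integral>\<^sup>+y. ennreal (jb (y\<^sup>2 - \<mu>) powr (-p)) \<partial>lborel)"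
    using nn_integral_real_affine[of "\<lambda>x. ennreal (jb (((x - 2 * \<xi>) / 2)\<^sup>2 - \<mu>) powr (-p))" 2 "2 * \<xi>"]
    by simp
  have "(\<integral>\<^sup>+w. f w \<partial>lborel) = (\<integral>\<^sup>+x. \<integral>\<^sup>+t. f (x, t) \<partial>lborel \<partial>lborel)"
    by (simp add: lborel_prod[symmetric] lborel.nn_integral_fst)
  also have "\<dots> \<le> (\<integral>\<^sup>+x. ennreal (jb (((x - 2 * \<xi>) / 2)\<^sup>2 - \<mu>) powr (-p)) * (2 * jb_powr_integral p) \<partial>lborel)"
    by (intro nn_integral_mono tau_integral)
  also have "\<dots> = 2 * (\<integral>\<^sup>+y. ennreal (jb (y\<^sup>2 - \<mu>) powr (-p)) \<partial>lborel) * (2 * jb_powr_integral p)"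
    by (simp add: nn_integral_multc xi_integral)
  also have "\<dots> \<le> 2 * (ennreal (2 powr p) * (2 * jb_powr_integral p)) * (2 * jb_powr_integral p)"
    by (intro mult_right_mono mult_left_mono nn_integral_jb_powr_quadratic_le[OF assms]) auto
  also have "\<dots> = 8 * ennreal (2 powr p) * jb_powr_integral p ^ 2"
    by (simp add: power2_eq_square mult_ac)
  finally show ?thesis
    unfolding f_def .
qed

definition xsb_weight :: "real \<Rightarrow> real \<Rightarrow> real \<Rightarrow> real \<times> real \<Rightarrow> real" where
  "xsb_weight s b a z = jb (fst z) powr s * jb (modulation a z) powr b"

lemma xsb_weight_nonneg: "0 \<le> xsb_weight s b a z"
  by (simp add: xsb_weight_def)

lemma borel_measurable_xsb_weight [measurable]: "xsb_weight s b a \<in> borel_measurable borel"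
proof -
  have "xsb_weight s b a \<in> borel_measurable (borel \<Otimes>\<^sub>M borel)"
    unfolding xsb_weight_def[abs_def] modulation_def by measurable
  then show ?thesis
    by (simp add: borel_prod)
qed

lemma Xsq_eq_xsb_weight:
  "Xsq s b a F = (\<integral>\<^sup>+z. ennreal (xsb_weight s b a z * cmod (F z)) ^ 2 \<partial>lborel)"
  unfolding Xsq_def xsb_weight_def modulation_def
  by (intro nn_integral_cong) (simp add: ennreal_power)

lemma xsb_weight_le_kernel:
  assumes "\<bar>\<kappa>\<bar> \<le> s" "0 \<le> d"
  shows "xsb_weight \<kappa> (-d) a\<^sub>0 z
           \<le> jb (modulation a\<^sub>1 (w - z)) powr (-b) * jb (modulation a\<^sub>2 w) powr (-b)
              * xsb_weight \<kappa> b a\<^sub>1 (w - z) * xsb_weight s b a\<^sub>2 w"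
proof -
  have "xsb_weight \<kappa> (-d) a\<^sub>0 z \<le> jb (fst z) powr \<kappa>"
    unfolding xsb_weight_def using assms(2)
    by (intro mult_left_le jb_powr_neg_le_1) auto
  also have "\<dots> \<le> jb (fst w - fst z) powr \<kappa> * jb (fst w) powr s"
    by (rule jb_powr_le_mult[OF assms(1)])
  also have "\<dots> = jb (modulation a\<^sub>1 (w - z)) powr (-b) * jb (modulation a\<^sub>2 w) powr (-b)
              * xsb_weight \<kappa> b a\<^sub>1 (w - z) * xsb_weight s b a\<^sub>2 w"
    using jb_pos[THEN less_imp_neq, THEN not_sym]
    by (simp add: xsb_weight_def powr_minus field_simps)
  finally show ?thesis .
qed

lemma nn_integral_convolution_kernel_square_le:
  fixes f g :: "'a::euclidean_space \<Rightarrow> ennreal" and k :: "'a \<Rightarrow> 'a \<Rightarrow> ennreal"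
  assumes [measurable]: "f \<in> borel_measurable borel" "g \<in> borel_measurable borel"
    and k_measurable: "\<And>z. k z \<in> borel_measurable borel"
    and k_bound: "\<And>z. (\<integral>\<^sup>+w. k z w ^ 2 \<partial>lborel) \<le> K"
  shows "(\<integral>\<^sup>+z. (\<integral>\<^sup>+w. k z w * f (w - z) * g w \<partial>lborel) ^ 2 \<partial>lborel)
           \<le> K * (\<integral>\<^sup>+x. f x ^ 2 \<partial>lborel) * (\<integral>\<^sup>+x. g x ^ 2 \<partial>lborel)"
proof -
  have pointwise: "(\<integral>\<^sup>+w. k z w * f (w - z) * g w \<partial>lborel) ^ 2
      \<le> K * (\<integral>\<^sup>+y. f y ^ 2 * g (z + y) ^ 2 \<partial>lborel)" for z
  proof -
    have "(\<integral>\<^sup>+w. k z w * f (w - z) * g w \<partial>lborel) ^ 2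
        \<le> (\<integral>\<^sup>+w. k z w ^ 2 \<partial>lborel) * (\<integral>\<^sup>+w. (f (w - z) * g w) ^ 2 \<partial>lborel)"
      using Cauchy_Schwarz_nn_integral[of "k z" lborel "\<lambda>w. f (w - z) * g w"] k_measurable
      by (simp add: mult.assoc)
    also have "(\<integral>\<^sup>+w. (f (w - z) * g w) ^ 2 \<partial>lborel) = (\<integral>\<^sup>+y. f y ^ 2 * g (z + y) ^ 2 \<partial>lborel)"
      using nn_integral_lborel_translate[of "\<lambda>w. (f (w - z) * g w) ^ 2" z]
      by (simp add: power_mult_distrib)
    also have "(\<integral>\<^sup>+w. k z w ^ 2 \<partial>lborel) * (\<integral>\<^sup>+y. f y ^ 2 * g (z + y) ^ 2 \<partial>lborel)
        \<le> K * (\<integral>\<^sup>+y. f y ^ 2 * g (z + y) ^ 2 \<partial>lborel)"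
      by (intro mult_right_mono k_bound) simp
    finally show ?thesis .
  qed
  have "(\<integral>\<^sup>+z. (\<integral>\<^sup>+w. k z w * f (w - z) * g w \<partial>lborel) ^ 2 \<partial>lborel)
      \<le> (\<integral>\<^sup>+z. K * (\<integral>\<^sup>+y. f y ^ 2 * g (z + y) ^ 2 \<partial>lborel) \<partial>lborel)"
    by (intro nn_integral_mono pointwise)
  also have "\<dots> = K * (\<integral>\<^sup>+y. \<integral>\<^sup>+z. f y ^ 2 * g (z + y) ^ 2 \<partial>lborel \<partial>lborel)"
    by (simp add: nn_integral_cmult lborel_pair.Fubini')
  also have "\<dots> = K * (\<integral>\<^sup>+y. f y ^ 2 * (\<integral>\<^sup>+x. g x ^ 2 \<partial>lborel) \<partial>lborel)"
    using nn_integral_lborel_translate[of "\<lambda>x. g x ^ 2"]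
    by (simp add: nn_integral_cmult add.commute)
  also have "\<dots> = K * (\<integral>\<^sup>+x. f x ^ 2 \<partial>lborel) * (\<integral>\<^sup>+x. g x ^ 2 \<partial>lborel)"
    by (simp add: nn_integral_multc mult.assoc)
  finally show ?thesis .
qed

lemma norm_integral_le_nn_integral_norm:
  fixes f :: "'a \<Rightarrow> 'b::{banach, second_countable_topology}"
  shows "ennreal (norm (integral\<^sup>L M f)) \<le> (\<integral>\<^sup>+x. ennreal (norm (f x)) \<partial>M)"
  by (cases "integrable M f") (simp_all add: integral_norm_bound_ennreal not_integrable_integral_eq)

lemma conj_prod_hat_weighted_le:
  assumes [measurable]: "F \<in> borel_measurable borel" "G \<in> borel_measurable borel"
    and "\<bar>\<kappa>\<bar> \<le> s" "0 \<le> d"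
  shows "ennreal (xsb_weight \<kappa> (-d) a\<^sub>0 z * cmod (conj_prod_hat F G z))
           \<le> (\<integral>\<^sup>+w. ennreal (jb (modulation a\<^sub>1 (w - z)) powr (-b) * jb (modulation a\<^sub>2 w) powr (-b))
                  * ennreal (xsb_weight \<kappa> b a\<^sub>1 (w - z) * cmod (F (w - z)))
                  * ennreal (xsb_weight s b a\<^sub>2 w * cmod (G w)) \<partial>lborel)"
proof -
  define W where "W = xsb_weight \<kappa> (-d) a\<^sub>0 z"
  have W_nonneg: "0 \<le> W"
    by (simp add: W_def xsb_weight_nonneg)
  have "ennreal (W * cmod (conj_prod_hat F G z)) = ennreal W * ennreal (cmod (conj_prod_hat F G z))"
    using W_nonneg by (simp add: ennreal_mult)
  also have "\<dots> \<le> ennreal W * (\<integral>\<^sup>+w. ennreal (cmod (F (w - z)) * cmod (G w)) \<partial>lborel)"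
    unfolding conj_prod_hat_def
    by (intro mult_left_mono) (simp_all add: norm_integral_le_nn_integral_norm[THEN order_trans] norm_mult)
  also have "\<dots> = (\<integral>\<^sup>+w. ennreal (W * (cmod (F (w - z)) * cmod (G w))) \<partial>lborel)"
    using W_nonneg by (simp add: nn_integral_cmult ennreal_mult)
  also have "\<dots> \<le> (\<integral>\<^sup>+w. ennreal (jb (modulation a\<^sub>1 (w - z)) powr (-b) * jb (modulation a\<^sub>2 w) powr (-b))
                  * ennreal (xsb_weight \<kappa> b a\<^sub>1 (w - z) * cmod (F (w - z)))
                  * ennreal (xsb_weight s b a\<^sub>2 w * cmod (G w)) \<partial>lborel)"
  proof (intro nn_integral_mono)
    fix w
    have "W * (cmod (F (w - z)) * cmod (G w))
        \<le> jb (modulation a\<^sub>1 (w - z)) powr (-b) * jb (modulation a\<^sub>2 w) powr (-b)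
           * xsb_weight \<kappa> b a\<^sub>1 (w - z) * xsb_weight s b a\<^sub>2 w * (cmod (F (w - z)) * cmod (G w))"
      unfolding W_def using assms(3,4) by (intro mult_right_mono xsb_weight_le_kernel) auto
    then show "ennreal (W * (cmod (F (w - z)) * cmod (G w)))
        \<le> ennreal (jb (modulation a\<^sub>1 (w - z)) powr (-b) * jb (modulation a\<^sub>2 w) powr (-b))
           * ennreal (xsb_weight \<kappa> b a\<^sub>1 (w - z) * cmod (F (w - z)))
           * ennreal (xsb_weight s b a\<^sub>2 w * cmod (G w))"
      by (simp add: xsb_weight_nonneg flip: ennreal_mult) (simp add: mult_ac)
  qed
  finally show ?thesis
    unfolding W_def .
qed

lemma ennreal_less_top_le_square:
  assumes "x < \<infinity>"
  obtains C :: real where "C > 0" "x \<le> ennreal (C\<^sup>2)"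
proof
  show "sqrt (enn2real x + 1) > 0"
    by (simp add: add_nonneg_pos)
  have "x = ennreal (enn2real x)"
    using assms by simp
  also have "\<dots> \<le> ennreal ((sqrt (enn2real x + 1))\<^sup>2)"
    by (intro ennreal_leI) simp
  finally show "x \<le> ennreal ((sqrt (enn2real x + 1))\<^sup>2)" .
qed

lemma Xsq_conj_prod_hat_le:
  assumes [measurable]: "F \<in> borel_measurable borel" "G \<in> borel_measurable borel"
    and "\<bar>\<kappa>\<bar> \<le> s" "0 \<le> d" "0 \<le> b"
  shows "Xsq \<kappa> (-d) 1 (conj_prod_hat F G)
           \<le> 8 * ennreal (2 powr (2 * b)) * jb_powr_integral (2 * b) ^ 2 * Xsq \<kappa> b 1 F * Xsq s b (1/2) G"
proof -
  define k where "k z w = ennreal (jb (modulation 1 (w - z)) powr (-b) * jb (modulation (1/2) w) powr (-b))" for z w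
  define f where "f y = ennreal (xsb_weight \<kappa> b 1 y * cmod (F y))" for y
  define g where "g y = ennreal (xsb_weight s b (1/2) y * cmod (G y))" for y
  have k_square: "k z w ^ 2 = ennreal (jb (modulation 1 (w - z)) powr (-(2 * b)) * jb (modulation (1/2) w) powr (-(2 * b)))" for z w
    using jb_pos[THEN less_imp_neq, THEN not_sym]
    by (simp add: k_def ennreal_power power_mult_distrib powr_power)
  have "Xsq \<kappa> (-d) 1 (conj_prod_hat F G) \<le> (\<integral>\<^sup>+z. (\<integral>\<^sup>+w. k z w * f (w - z) * g w \<partial>lborel) ^ 2 \<partial>lborel)"
    unfolding Xsq_eq_xsb_weight k_def f_def g_def using assms(3,4)
    by (intro nn_integral_mono power_mono conj_prod_hat_weighted_le) auto
  also have "\<dots> \<le> 8 * ennreal (2 powr (2 * b)) * jb_powr_integral (2 * b) ^ 2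
                   * (\<integral>\<^sup>+x. f x ^ 2 \<partial>lborel) * (\<integral>\<^sup>+x. g x ^ 2 \<partial>lborel)"
  proof (rule nn_integral_convolution_kernel_square_le)
    show "(\<integral>\<^sup>+w. k z w ^ 2 \<partial>lborel) \<le> 8 * ennreal (2 powr (2 * b)) * jb_powr_integral (2 * b) ^ 2" for z
      unfolding k_square using assms(5) by (intro nn_integral_modulation_kernel_le) simp
  qed (simp_all add: k_def f_def g_def)
  also have "\<dots> = 8 * ennreal (2 powr (2 * b)) * jb_powr_integral (2 * b) ^ 2 * Xsq \<kappa> b 1 F * Xsq s b (1/2) G"
    by (simp add: Xsq_eq_xsb_weight f_def g_def)
  finally show ?thesis .
qed

theorem proposition3p5:
  fixes b d \<kappa> s :: real
  assumes "1/2 < b" "b < 3/4" "1/4 < d" "d < 1/2" "\<bar>\<kappa>\<bar> \<le> s"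
  shows "\<exists>C>0. \<forall>F G.
           F \<in> borel_measurable lborel \<longrightarrow> G \<in> borel_measurable lborel \<longrightarrow>
           Xsq \<kappa> b 1 F < \<infinity> \<longrightarrow> Xsq s b (1/2) G < \<infinity> \<longrightarrow>
           Xsq \<kappa> (-d) 1 (conj_prod_hat F G)
             \<le> ennreal (C^2) * Xsq \<kappa> b 1 F * Xsq s b (1/2) G"
proof -
  define K where "K = 8 * ennreal (2 powr (2 * b)) * jb_powr_integral (2 * b) ^ 2"
  have "K < \<infinity>"
    using jb_powr_integral_finite[of "2 * b"] assms(1)
    by (simp add: K_def ennreal_mult_less_top power_less_top_ennreal)
  then obtain C where "C > 0" and K_le: "K \<le> ennreal (C\<^sup>2)"
    by (rule ennreal_less_top_le_square)
  have "Xsq \<kappa> (-d) 1 (conj_prod_hat F G) \<le> ennreal (C\<^sup>2) * Xsq \<kappa> b 1 F * Xsq s b (1/2) G"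
    if "F \<in> borel_measurable borel" "G \<in> borel_measurable borel" for F G
  proof -
    have "Xsq \<kappa> (-d) 1 (conj_prod_hat F G) \<le> K * Xsq \<kappa> b 1 F * Xsq s b (1/2) G"
      unfolding K_def using that assms by (intro Xsq_conj_prod_hat_le) auto
    also have "\<dots> \<le> ennreal (C\<^sup>2) * Xsq \<kappa> b 1 F * Xsq s b (1/2) G"
      using K_le by (intro mult_right_mono) auto
    finally show ?thesis .
  qed
  with \<open>C > 0\<close> show ?thesis
    by auto
qed

end
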